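(* Let $m$ be a positive integer, and let $\langle \mathscr{A} \mid \mathscr{R} \rangle$ be a generator-minimal strongly $C(2)$ presentation for a monoid which admits a strongly $C(m)$ presentation. Then $\langle \mathscr{A} \mid \mathscr{R} \rangle$ is a strongly $C(m)$ presentation.
   Context: A monoid presentation $\langle \mathscr{A} \mid \mathscr{R} \rangle$ consists of an alphabet $\mathscr{A}$ and a set $\mathscr{R} \subseteq \mathscr{A}^* \times \mathscr{A}^*$ of relations; the monoid presented is $\mathscr{A}^*$ modulo the smallest congruence $\equiv_\mathscr{R}$ containing $\mathscr{R}$. A relation word is a word occurring as one side of a relation. A piece is a word which occurs as a factor of two distinct relation words, or in two different (possibly overlapping) positions within one relation word; the empty word is always a piece. For a positive integer $n$ the presentation is $C(n)$ if no relation word can be written as a product of strictly fewer than $n$ pieces, and strongly $C(n)$ if it is $C(n)$ and in addition has no repeated relation words (no relation word occurs more than once as a side of a relation). A generator $a$ is redundant if it is $\equiv_\mathscr{R}$-equivalent to a product of zero or more other generators; the presentation is generator-minimal if it has no redundant generators. *)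

theory Defs
  imports Main
begin

definition is_presentation :: "'a set \<Rightarrow> ('a list \<times> 'a list) set \<Rightarrow> bool" where
  "is_presentation A R \<longleftrightarrow> R \<subseteq> lists A \<times> lists A"

inductive pres_eq :: "('a list \<times> 'a list) set \<Rightarrow> 'a list \<Rightarrow> 'a list \<Rightarrow> bool"
  for R where
  rel: "(u, v) \<in> R \<Longrightarrow> pres_eq R (x @ u @ y) (x @ v @ y)"
| refl: "pres_eq R w w"
| sym: "pres_eq R u v \<Longrightarrow> pres_eq R v u"
| trans: "pres_eq R u v \<Longrightarrow> pres_eq R v w \<Longrightarrow> pres_eq R u w"

definition rel_words :: "('a list \<times> 'a list) set \<Rightarrow> 'a list set" where
  "rel_words R = fst ` R \<union> snd ` R"

definition occurs_at :: "'a list \<Rightarrow> 'a list \<Rightarrow> nat \<Rightarrow> bool" where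
  "occurs_at p w i \<longleftrightarrow> i + length p \<le> length w \<and> take (length p) (drop i w) = p"

definition is_factor :: "'a list \<Rightarrow> 'a list \<Rightarrow> bool" where
  "is_factor p w \<longleftrightarrow> (\<exists>x y. w = x @ p @ y)"

definition piece :: "('a list \<times> 'a list) set \<Rightarrow> 'a list \<Rightarrow> bool" where
  "piece R p \<longleftrightarrow> p = [] \<or>
     (\<exists>u \<in> rel_words R. \<exists>v \<in> rel_words R. u \<noteq> v \<and> is_factor p u \<and> is_factor p v) \<or>
     (\<exists>u \<in> rel_words R. \<exists>i j. i \<noteq> j \<and> occurs_at p u i \<and> occurs_at p u j)"

definition C_cond :: "nat \<Rightarrow> ('a list \<times> 'a list) set \<Rightarrow> bool" where
  "C_cond n R \<longleftrightarrow> (\<forall>w \<in> rel_words R. \<forall>ps. (\<forall>p \<in> set ps. piece R p) \<and> concat ps = w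
                        \<longrightarrow> n \<le> length ps)"

definition no_repeated_rel_words :: "('a list \<times> 'a list) set \<Rightarrow> bool" where
  "no_repeated_rel_words R \<longleftrightarrow>
     (\<forall>r1 \<in> R. \<forall>r2 \<in> R. \<forall>b1 b2 :: bool.
        (if b1 then fst r1 else snd r1) = (if b2 then fst r2 else snd r2) \<longrightarrow> r1 = r2 \<and> b1 = b2)"

definition strongly_C :: "nat \<Rightarrow> ('a list \<times> 'a list) set \<Rightarrow> bool" where
  "strongly_C n R \<longleftrightarrow> C_cond n R \<and> no_repeated_rel_words R"

definition redundant_gen :: "'a set \<Rightarrow> ('a list \<times> 'a list) set \<Rightarrow> 'a \<Rightarrow> bool" where
  "redundant_gen A R a \<longleftrightarrow> (\<exists>w \<in> lists (A - {a}). pres_eq R [a] w)"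

definition generator_minimal :: "'a set \<Rightarrow> ('a list \<times> 'a list) set \<Rightarrow> bool" where
  "generator_minimal A R \<longleftrightarrow> (\<forall>a \<in> A. \<not> redundant_gen A R a)"

text \<open>The monoids presented by (A,R) and (B,S) are isomorphic: there is a map on
  words inducing a well-defined, injective, surjective monoid homomorphism
  A*/R \<rightarrow> B*/S.\<close>
definition presented_iso ::
  "'a set \<Rightarrow> ('a list \<times> 'a list) set \<Rightarrow> 'b set \<Rightarrow> ('b list \<times> 'b list) set \<Rightarrow> bool" where
  "presented_iso A R B S \<longleftrightarrow> (\<exists>h :: 'a list \<Rightarrow> 'b list.
     (\<forall>u \<in> lists A. h u \<in> lists B) \<and>
     (\<forall>u \<in> lists A. \<forall>v \<in> lists A. pres_eq R u v \<longleftrightarrow> pres_eq S (h u) (h v)) \<and>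
     (\<forall>u \<in> lists A. \<forall>v \<in> lists A. pres_eq S (h (u @ v)) (h u @ h v)) \<and>
     pres_eq S (h []) [] \<and>
     (\<forall>w \<in> lists B. \<exists>u \<in> lists A. pres_eq S (h u) w))"

end

theory Submission
  imports Defs
begin

text \<open>A relation word of a generator-minimal C(2) presentation is never a single generator:
  its partner word would either contain that generator as a proper factor, or express it in the
  remaining generators. So generators have singleton classes, and an isomorphism onto the monoid of
  another C(2) presentation sends generators to generators; this yields a letter map f with
  u = v in the first monoid iff f u = f v in the second. Replacing every generator of the second
  presentation by the f-image of a preimage makes each relation with a single-letter side
  trivial, so f-images that are equal in the second monoid are already equal modulo its
  relations between words of length at least two. Consequently every relation word maps to a
  relation word, pieces map to pieces, and the condition C(m) pulls back along f.\<close>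


lemma rel_words_pairD: "(r, r') \<in> T \<Longrightarrow> r \<in> rel_words T \<and> r' \<in> rel_words T"
  unfolding rel_words_def by force

lemma rel_words_in_lists: "is_presentation A T \<Longrightarrow> w \<in> rel_words T \<Longrightarrow> w \<in> lists A"
  unfolding is_presentation_def rel_words_def by auto

lemma pres_eq_relI: "(u, v) \<in> T \<Longrightarrow> pres_eq T u v"
  using pres_eq.rel[of u v T "[]" "[]"] by simp

lemma pres_eq_context: "pres_eq T u v \<Longrightarrow> pres_eq T (x @ u @ y) (x @ v @ y)"
proof (induction rule: pres_eq.induct)
  case (rel s s' x' y')
  then show ?case using pres_eq.rel[of s s' T "x @ x'" "y' @ y"] by simp
next
  case (refl w) show ?case by (rule pres_eq.refl)
next
  case (sym a b) from sym.IH show ?case by (rule pres_eq.sym)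
next
  case (trans a b c) from trans.IH show ?case by (rule pres_eq.trans)
qed

lemma pres_eq_append:
  assumes "pres_eq T u u'" "pres_eq T v v'"
  shows "pres_eq T (u @ v) (u' @ v')"
proof -
  have "pres_eq T (u @ v) (u' @ v)" using pres_eq_context[OF assms(1), of "[]" v] by simp
  moreover have "pres_eq T (u' @ v) (u' @ v')" using pres_eq_context[OF assms(2), of u' "[]"] by simp
  ultimately show ?thesis by (rule pres_eq.trans)
qed

lemma pres_eq_concat_map:
  assumes "pres_eq S z z'"
    and rels: "\<And>r r'. (r, r') \<in> S \<Longrightarrow> pres_eq T (concat (map \<nu> r)) (concat (map \<nu> r'))"
  shows "pres_eq T (concat (map \<nu> z)) (concat (map \<nu> z'))"
  using assms(1)
proof induction
  case (rel r r' x y)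
  then show ?case
    using pres_eq_append[OF pres_eq.refl pres_eq_append[OF rels pres_eq.refl]] by simp
next
  case (refl w) show ?case by (rule pres_eq.refl)
next
  case (sym a b) from sym.IH show ?case by (rule pres_eq.sym)
next
  case (trans a b c) from trans.IH show ?case by (rule pres_eq.trans)
qed

lemma pres_eq_trivial_class:
  assumes "pres_eq T z v" and "\<And>x s y. z = x @ s @ y \<Longrightarrow> s \<notin> rel_words T"
  shows "v = z"
proof -
  have "(u = z \<longrightarrow> v = z) \<and> (v = z \<longrightarrow> u = z)" if "pres_eq T u v" for u v
    using that
  proof induction
    case (rel s s' x y)
    then show ?case using assms(2)[of x s y] assms(2)[of x s' y] rel_words_pairD[OF rel] by blast
  qed blast+
  then show ?thesis using assms(1) by blast
qed

lemma no_repeated_rel_wordsD: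
  assumes "no_repeated_rel_words T" "r1 \<in> T" "r2 \<in> T"
    and "(if b1 then fst r1 else snd r1) = (if b2 then fst r2 else snd r2)"
  shows "r1 = r2 \<and> b1 = b2"
  using assms(1)[unfolded no_repeated_rel_words_def, rule_format, OF assms(2-4)] .

lemma no_repeated_fst_eq:
  "no_repeated_rel_words T \<Longrightarrow> (u, v) \<in> T \<Longrightarrow> (u, v') \<in> T \<Longrightarrow> v = v'"
  using no_repeated_rel_wordsD[of T "(u, v)" "(u, v')" True True] by simp

lemma no_repeated_snd_eq:
  "no_repeated_rel_words T \<Longrightarrow> (u, v) \<in> T \<Longrightarrow> (u', v) \<in> T \<Longrightarrow> u = u'"
  using no_repeated_rel_wordsD[of T "(u, v)" "(u', v)" False False] by simp

lemma no_repeated_fst_snd: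
  "no_repeated_rel_words T \<Longrightarrow> (u, v) \<in> T \<Longrightarrow> (u', u) \<in> T \<Longrightarrow> False"
  using no_repeated_rel_wordsD[of T "(u, v)" "(u', u)" True False] by simp

lemma rel_word_partner:
  assumes "no_repeated_rel_words T" and "w \<in> rel_words T"
  obtains w' where "w' \<in> rel_words T" "w' \<noteq> w" "pres_eq T w w'"
proof -
  obtain w' where w': "(w, w') \<in> T \<or> (w', w) \<in> T"
    using assms(2) unfolding rel_words_def by force
  then have "w' \<in> rel_words T" "pres_eq T w w'"
    using rel_words_pairD by (blast, metis pres_eq_relI pres_eq.sym)
  moreover have "w' \<noteq> w" using w' no_repeated_fst_snd[OF assms(1)] by blast
  ultimately show ?thesis using that by blast
qed

lemma C_cond_mono: "C_cond n T \<Longrightarrow> k \<le> n \<Longrightarrow> C_cond k T"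
  unfolding C_cond_def by (meson order_trans)

lemma C_condD:
  "C_cond n T \<Longrightarrow> w \<in> rel_words T \<Longrightarrow> (\<And>p. p \<in> set ps \<Longrightarrow> piece T p) \<Longrightarrow> concat ps = w
    \<Longrightarrow> n \<le> length ps"
  unfolding C_cond_def by blast

lemma C_cond_rel_word_nonempty: "C_cond 1 T \<Longrightarrow> w \<in> rel_words T \<Longrightarrow> w \<noteq> []"
  using C_condD[of 1 T w "[]"] by auto

lemma C_cond_rel_word_not_piece: "C_cond 2 T \<Longrightarrow> w \<in> rel_words T \<Longrightarrow> \<not> piece T w"
  using C_condD[of 2 T w "[w]"] by auto

lemma C_cond_rel_word_factor:
  assumes C: "C_cond 2 T" and s: "s \<in> rel_words T" and w: "w \<in> rel_words T" and e: "w = x @ s @ y"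
  shows "x = [] \<and> y = []"
proof (cases "s = w")
  case True
  then have "length (x @ s @ y) = length s" using e by simp
  then show ?thesis by simp
next
  case False
  have "is_factor s s" "is_factor s w"
    unfolding is_factor_def using e by (metis append_Nil append_Nil2, blast)
  then have "piece T s" unfolding piece_def using s w False by blast
  then show ?thesis using C_cond_rel_word_not_piece[OF C s] by blast
qed

lemma C_cond_letter_class:
  assumes "C_cond 1 T" "[a] \<notin> rel_words T" "pres_eq T [a] z"
  shows "z = [a]"
proof (rule pres_eq_trivial_class[OF assms(3)])
  fix x s y assume "[a] = x @ s @ y"
  then have "s = [] \<or> s = [a]" by (cases x) (auto simp: Cons_eq_append_conv append_eq_Cons_conv)
  then show "s \<notin> rel_words T" using assms(1,2) C_cond_rel_word_nonempty by blast
qed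

lemma C_cond_empty_class: "C_cond 1 T \<Longrightarrow> pres_eq T [] z \<Longrightarrow> z = []"
  using pres_eq_trivial_class C_cond_rel_word_nonempty by fastforce

lemma C_cond_proper_factor_class:
  assumes C: "C_cond 2 T" and u: "u \<in> rel_words T" "u = x @ q @ y" "x @ y \<noteq> []"
    and "pres_eq T q z"
  shows "z = q"
proof (rule pres_eq_trivial_class[OF assms(5)])
  fix x' s y' assume "q = x' @ s @ y'"
  then have "u = (x @ x') @ s @ (y' @ y)" using u(2) by simp
  then show "s \<notin> rel_words T" using C_cond_rel_word_factor[OF C _ u(1)] u(3) by blast
qed

lemma C_cond_long_rel_word_letter:
  assumes "C_cond 2 T" "r \<in> rel_words T" "2 \<le> length r" "b \<in> set r"
  shows "[b] \<notin> rel_words T"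
proof
  assume b: "[b] \<in> rel_words T"
  obtain x y where r: "r = x @ [b] @ y" using assms(4) by (metis split_list append_Cons append_Nil)
  then have "x = [] \<and> y = []" using C_cond_rel_word_factor[OF assms(1) b assms(2)] by blast
  then show False using r assms(3) by simp
qed

lemma strongly_C_pair_class:
  assumes C: "C_cond 2 T" and nr: "no_repeated_rel_words T" and rr: "(r, r') \<in> T"
    and "pres_eq T u v" "u \<in> {r, r'}"
  shows "v \<in> {r, r'}"
proof -
  have r: "r \<in> rel_words T" "r' \<in> rel_words T" using rel_words_pairD[OF rr] by auto
  have "(u \<in> {r, r'} \<longrightarrow> v \<in> {r, r'}) \<and> (v \<in> {r, r'} \<longrightarrow> u \<in> {r, r'})" if "pres_eq T u v" for u v
    using that
  proof induction
    case (rel s s' x y)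
    have s: "s \<in> rel_words T" "s' \<in> rel_words T" using rel_words_pairD[OF rel] by auto
    show ?case
    proof (intro conjI impI)
      assume a: "x @ s @ y \<in> {r, r'}"
      then have "x = [] \<and> y = []" using C_cond_rel_word_factor[OF C s(1)] r by blast
      then have "s = r" using a no_repeated_fst_snd[OF nr rel] rr by auto
      then show "x @ s' @ y \<in> {r, r'}"
        using \<open>x = [] \<and> y = []\<close> no_repeated_fst_eq[OF nr] rel rr by auto
    next
      assume a: "x @ s' @ y \<in> {r, r'}"
      then have "x = [] \<and> y = []" using C_cond_rel_word_factor[OF C s(2)] r by blast
      then have "s' = r'" using a no_repeated_fst_snd[OF nr rr] rel by auto
      then show "x @ s @ y \<in> {r, r'}"
        using \<open>x = [] \<and> y = []\<close> no_repeated_snd_eq[OF nr] rel rr by auto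
    qed
  qed blast+
  then show ?thesis using assms(4,5) by blast
qed

lemma generator_minimal_letter_not_rel_word:
  assumes "is_presentation A R" "generator_minimal A R" "strongly_C 2 R" "a \<in> A"
  shows "[a] \<notin> rel_words R"
proof
  assume a: "[a] \<in> rel_words R"
  have C: "C_cond 2 R" and nr: "no_repeated_rel_words R"
    using assms(3) unfolding strongly_C_def by auto
  obtain v where v: "v \<in> rel_words R" "v \<noteq> [a]" "pres_eq R [a] v"
    using rel_word_partner[OF nr a] .
  have "a \<notin> set v"
  proof
    assume "a \<in> set v"
    then obtain x y where xy: "v = x @ [a] @ y" by (metis split_list append_Cons append_Nil)
    then have "x = [] \<and> y = []" using C_cond_rel_word_factor[OF C a v(1)] by blast
    then show False using xy v(2) by simp
  qed
  then have "v \<in> lists (A - {a})" using rel_words_in_lists[OF assms(1) v(1)] by auto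
  then have "redundant_gen A R a" unfolding redundant_gen_def using v(3) by blast
  then show False using assms(2,4) unfolding generator_minimal_def by blast
qed

locale word_iso =
  fixes A :: "'a set" and R :: "('a list \<times> 'a list) set"
    and B :: "'b set" and S :: "('b list \<times> 'b list) set"
    and h :: "'a list \<Rightarrow> 'b list"
  assumes maps_into: "\<And>u. u \<in> lists A \<Longrightarrow> h u \<in> lists B"
    and pres_eq_iff: "\<And>u v. u \<in> lists A \<Longrightarrow> v \<in> lists A \<Longrightarrow> pres_eq R u v \<longleftrightarrow> pres_eq S (h u) (h v)"
    and append_hom: "\<And>u v. u \<in> lists A \<Longrightarrow> v \<in> lists A \<Longrightarrow> pres_eq S (h (u @ v)) (h u @ h v)"
    and Nil_hom: "pres_eq S (h []) []"
    and surjective: "\<And>w. w \<in> lists B \<Longrightarrow> \<exists>u \<in> lists A. pres_eq S (h u) w"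
begin

lemma letter_image:
  assumes letter_class: "\<And>z. pres_eq R [a] z \<Longrightarrow> z = [a]" and "C_cond 1 S" and a: "a \<in> A"
  shows "\<exists>b \<in> B. pres_eq S (h [a]) [b]"
proof -
  have empty_class: "w = []" if "pres_eq S (h []) w" for w
    using C_cond_empty_class[OF \<open>C_cond 1 S\<close>] that Nil_hom pres_eq.sym pres_eq.trans by metis
  have ha: "h [a] \<in> lists B" using maps_into a by simp
  consider "h [a] = []" | b where "h [a] = [b]" | b w where "h [a] = b # w" "w \<noteq> []"
    by (metis list.exhaust)
  then show ?thesis
  proof cases
    case 1
    then have "pres_eq S (h [a]) (h [])" using Nil_hom pres_eq.sym by simp
    then have "pres_eq R [a] []" using pres_eq_iff a by simp
    then show ?thesis using letter_class by blast
  next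
    case (2 b)
    then show ?thesis using ha pres_eq.refl by auto
  next
    case (3 b w)
    obtain t1 where t1: "t1 \<in> lists A" "pres_eq S (h t1) [b]" using surjective ha 3(1) by force
    obtain t2 where t2: "t2 \<in> lists A" "pres_eq S (h t2) w" using surjective ha 3(1) by force
    have "pres_eq S (h (t1 @ t2)) (h [a])"
      using append_hom[OF t1(1) t2(1)] pres_eq_append[OF t1(2) t2(2)] 3(1) pres_eq.trans by simp
    then have "pres_eq R [a] (t1 @ t2)" using pres_eq_iff a t1(1) t2(1) pres_eq.sym by simp
    then have "t1 = [] \<or> t2 = []" using letter_class by (cases t1) auto
    then show ?thesis using empty_class t1(2) t2(2) 3(2) by blast
  qed
qed

lemma letter_map:
  assumes "\<And>a z. a \<in> A \<Longrightarrow> pres_eq R [a] z \<Longrightarrow> z = [a]" and "C_cond 1 S"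
  obtains f where "f ` A \<subseteq> B"
    and "\<And>u v. u \<in> lists A \<Longrightarrow> v \<in> lists A \<Longrightarrow> pres_eq R u v \<longleftrightarrow> pres_eq S (map f u) (map f v)"
    and "\<And>b. b \<in> B \<Longrightarrow> \<exists>t \<in> lists A. pres_eq S [b] (map f t)"
proof
  define f where "f a = (SOME b. b \<in> B \<and> pres_eq S (h [a]) [b])" for a
  have f: "f a \<in> B \<and> pres_eq S (h [a]) [f a]" if "a \<in> A" for a
    unfolding f_def using letter_image[OF assms(1) assms(2) that] that by (metis (mono_tags) someI_ex)
  then show "f ` A \<subseteq> B" by blast
  have h_map: "pres_eq S (h t) (map f t)" if "t \<in> lists A" for t
    using that
  proof (induction t)
    case Nil
    then show ?case using Nil_hom by simp
  next
    case (Cons a t)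
    then have a: "a \<in> A" and t: "t \<in> lists A" by auto
    have "pres_eq S (h ([a] @ t)) (h [a] @ h t)" using append_hom[of "[a]" t] a t by simp
    moreover have "pres_eq S (h [a] @ h t) ([f a] @ map f t)"
      using pres_eq_append[OF conjunct2[OF f[OF a]] Cons.IH] .
    ultimately show ?case using pres_eq.trans by simp
  qed
  show "pres_eq R u v \<longleftrightarrow> pres_eq S (map f u) (map f v)" if "u \<in> lists A" "v \<in> lists A" for u v
    using pres_eq_iff[OF that] h_map[OF that(1)] h_map[OF that(2)] pres_eq.sym pres_eq.trans by meson
  show "\<exists>t \<in> lists A. pres_eq S [b] (map f t)" if "b \<in> B" for b
    using surjective[of "[b]"] that h_map pres_eq.sym pres_eq.trans by (metis Cons_in_lists_iff lists.Nil)
qed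

end

definition long_rels :: "('a list \<times> 'a list) set \<Rightarrow> ('a list \<times> 'a list) set" where
  "long_rels S = {(r, r') \<in> S. 2 \<le> length r \<and> 2 \<le> length r'}"

locale letter_embedding =
  fixes A :: "'a set" and R :: "('a list \<times> 'a list) set"
    and B :: "'b set" and S :: "('b list \<times> 'b list) set"
    and f :: "'a \<Rightarrow> 'b"
  assumes presentation_R: "is_presentation A R"
    and presentation_S: "is_presentation B S"
    and strongly_C2_R: "strongly_C 2 R"
    and strongly_C2_S: "strongly_C 2 S"
    and letters_not_rel_words: "\<And>a. a \<in> A \<Longrightarrow> [a] \<notin> rel_words R"
    and image_subset: "f ` A \<subseteq> B"
    and pres_eq_map_iff:
      "\<And>u v. u \<in> lists A \<Longrightarrow> v \<in> lists A \<Longrightarrow> pres_eq R u v \<longleftrightarrow> pres_eq S (map f u) (map f v)"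
    and map_surj: "\<And>b. b \<in> B \<Longrightarrow> \<exists>t \<in> lists A. pres_eq S [b] (map f t)"
begin

lemma C2_R: "C_cond 2 R" and no_repeated_R: "no_repeated_rel_words R"
  and C2_S: "C_cond 2 S" and no_repeated_S: "no_repeated_rel_words S"
  using strongly_C2_R strongly_C2_S unfolding strongly_C_def by auto

lemma C1_R: "C_cond 1 R" and C1_S: "C_cond 1 S"
  using C_cond_mono[OF C2_R, of 1] C_cond_mono[OF C2_S, of 1] by simp_all

lemma letter_class_R: "a \<in> A \<Longrightarrow> pres_eq R [a] z \<Longrightarrow> z = [a]"
  using C_cond_letter_class[OF C1_R letters_not_rel_words] by blast

lemma pres_eq_map_letter: "a \<in> A \<Longrightarrow> t \<in> lists A \<Longrightarrow> pres_eq S [f a] (map f t) \<Longrightarrow> t = [a]"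
  using pres_eq_map_iff[of "[a]" t] letter_class_R by simp

lemma inj_on_map_f: "inj_on (map f) (lists A)"
proof (rule inj_on_map_lists, rule inj_onI)
  fix a a' assume a: "a \<in> A" "a' \<in> A" "f a = f a'"
  then have "pres_eq S [f a] (map f [a'])" using pres_eq.refl by simp
  then show "a = a'" using pres_eq_map_letter[of a "[a']"] a by simp
qed

lemma long_rel_word_in_image:
  assumes r: "r \<in> rel_words S" "2 \<le> length r"
  shows "r \<in> map f ` lists A"
proof -
  have "b \<in> f ` A" if b: "b \<in> set r" for b
  proof -
    have "b \<in> B" using rel_words_in_lists[OF presentation_S r(1)] b by auto
    then obtain t where t: "t \<in> lists A" "pres_eq S [b] (map f t)" using map_surj by blast
    have "[b] \<notin> rel_words S" using C_cond_long_rel_word_letter[OF C2_S r b] .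
    then have "map f t = [b]" using C_cond_letter_class[OF C1_S _ t(2)] by blast
    then show ?thesis using t(1) by (auto simp: map_eq_Cons_conv)
  qed
  then have "r \<in> lists (f ` A)" by blast
  then show ?thesis by (simp add: lists_image)
qed

definition letter_preimage :: "'b \<Rightarrow> 'a list" where
  "letter_preimage b = (SOME t. t \<in> lists A \<and> pres_eq S [b] (map f t))"

definition preimage :: "'b list \<Rightarrow> 'a list" where
  "preimage w = concat (map letter_preimage w)"

lemma letter_preimage:
  assumes "b \<in> B"
  shows "letter_preimage b \<in> lists A \<and> pres_eq S [b] (map f (letter_preimage b))"
  unfolding letter_preimage_def by (rule someI_ex) (use map_surj[OF assms] in blast)

lemma preimage_in_lists: "w \<in> lists B \<Longrightarrow> preimage w \<in> lists A"
  by (induction w) (simp_all add: preimage_def letter_preimage)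

lemma pres_eq_map_preimage: "w \<in> lists B \<Longrightarrow> pres_eq S w (map f (preimage w))"
proof (induction w)
  case Nil
  then show ?case by (simp add: preimage_def pres_eq.refl)
next
  case (Cons b w)
  then have "pres_eq S ([b] @ w) (map f (letter_preimage b) @ map f (preimage w))"
    using pres_eq_append[OF conjunct2[OF letter_preimage]] by simp
  then show ?case by (simp add: preimage_def)
qed

lemma preimage_map: "u \<in> lists A \<Longrightarrow> preimage (map f u) = u"
proof (induction u)
  case (Cons a u)
  have "f a \<in> B" using image_subset Cons.prems by auto
  then have "letter_preimage (f a) = [a]"
    using letter_preimage pres_eq_map_letter Cons.prems by simp
  then show ?case using Cons by (simp add: preimage_def)
qed (simp add: preimage_def)

lemma preimage_letter_rel:
  assumes rel: "([c], r) \<in> S \<or> (r, [c]) \<in> S"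
  shows "preimage r = letter_preimage c"
proof -
  have "[c] \<in> rel_words S" "r \<in> rel_words S" using rel rel_words_pairD by blast+
  then have "[c] \<in> lists B" and r: "r \<in> lists B" using rel_words_in_lists[OF presentation_S] by blast+
  then have c: "c \<in> B" by simp
  define t where "t = letter_preimage c"
  have t: "t \<in> lists A" "pres_eq S [c] (map f t)" using letter_preimage[OF c] by (auto simp: t_def)
  have "map f t \<in> {[c], r}"
    using rel strongly_C_pair_class[OF C2_S no_repeated_S _ t(2)] by blast
  then show ?thesis
  proof
    assume "map f t = [c]"
    then obtain a where a: "t = [a]" "a \<in> A" "f a = c" using t(1) by (auto simp: map_eq_Cons_conv)
    have "pres_eq S [c] r" using rel by (metis pres_eq_relI pres_eq.sym)
    then have "pres_eq S [f a] (map f (preimage r))"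
      using pres_eq.trans[OF _ pres_eq_map_preimage[OF r]] a(3) by simp
    then show ?thesis using pres_eq_map_letter a preimage_in_lists[OF r] t_def by simp
  next
    assume "map f t \<in> {r}"
    then show ?thesis using preimage_map t(1) t_def by auto
  qed
qed

lemma preimage_rel:
  assumes rel: "(r, r') \<in> S"
  shows "pres_eq (long_rels S) (map f (preimage r)) (map f (preimage r'))"
proof -
  have ne: "r \<noteq> []" "r' \<noteq> []"
    using rel_words_pairD[OF rel] C_cond_rel_word_nonempty[OF C1_S] by blast+
  have long: "2 \<le> length w" if "w \<noteq> []" "\<And>c. w \<noteq> [c]" for w :: "'b list"
    using that by (cases w; cases "tl w") auto
  consider c where "r = [c]" | c where "r' = [c]" | "2 \<le> length r" "2 \<le> length r'"
    using long ne by blast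
  then show ?thesis
  proof cases
    case (1 c)
    then show ?thesis using preimage_letter_rel[of c r'] rel pres_eq.refl by (simp add: preimage_def)
  next
    case (2 c)
    then show ?thesis using preimage_letter_rel[of c r] rel pres_eq.refl by (simp add: preimage_def)
  next
    case 3
    have "map f (preimage w) = w" if w: "w \<in> rel_words S" "2 \<le> length w" for w
    proof -
      obtain u where "u \<in> lists A" "w = map f u" using long_rel_word_in_image[OF w] by blast
      then show ?thesis using preimage_map by simp
    qed
    moreover have "(r, r') \<in> long_rels S" using 3 rel by (simp add: long_rels_def)
    ultimately show ?thesis using 3 rel_words_pairD[OF rel] pres_eq_relI by metis
  qed
qed

lemma pres_eq_long_rels:
  "pres_eq S z z' \<Longrightarrow> pres_eq (long_rels S) (map f (preimage z)) (map f (preimage z'))"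
  using pres_eq_concat_map[of S z z' "long_rels S" "\<lambda>b. map f (letter_preimage b)"] preimage_rel
  by (simp add: preimage_def map_concat comp_def)

lemma pres_eq_image_long_rels:
  "u \<in> lists A \<Longrightarrow> v \<in> lists A \<Longrightarrow> pres_eq S (map f u) (map f v)
    \<Longrightarrow> pres_eq (long_rels S) (map f u) (map f v)"
  using pres_eq_long_rels[of "map f u" "map f v"] preimage_map by simp

lemma long_rel_word_factor_of_image:
  assumes u: "u \<in> rel_words R" and e: "map f u = x @ s @ y" and s: "s \<in> rel_words (long_rels S)"
  shows "x = [] \<and> y = []"
proof (rule ccontr)
  assume proper: "\<not> (x = [] \<and> y = [])"
  obtain s' where s': "(s, s') \<in> S \<or> (s', s) \<in> S" "2 \<le> length s'"
    using s unfolding rel_words_def long_rels_def by force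
  obtain x0 r0 where "u = x0 @ r0" "x = map f x0" "s @ y = map f r0"
    using e map_eq_append_conv[of f u x "s @ y"] by metis
  moreover obtain q y0 where "r0 = q @ y0" "s = map f q" "y = map f y0"
    using \<open>s @ y = map f r0\<close> map_eq_append_conv[of f r0 s y] by metis
  ultimately have u_split: "u = x0 @ q @ y0" and q: "s = map f q"
    and "x = map f x0" "y = map f y0" by simp_all
  then have "x0 @ y0 \<noteq> []" using proper by auto
  have uA: "u \<in> lists A" using rel_words_in_lists[OF presentation_R u] .
  then have qA: "q \<in> lists A" using u_split by simp
  obtain t where t: "t \<in> lists A" "s' = map f t"
    using long_rel_word_in_image[OF _ s'(2)] s'(1) rel_words_pairD by blast
  have "pres_eq S s s'" using s'(1) by (metis pres_eq_relI pres_eq.sym)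
  then have "pres_eq R q t" using pres_eq_map_iff[OF qA t(1)] q t(2) by simp
  then have "t = q" using C_cond_proper_factor_class[OF C2_R u u_split \<open>x0 @ y0 \<noteq> []\<close>] by blast
  then have "s' = s" using q t(2) by simp
  then show False using s'(1) no_repeated_fst_snd[OF no_repeated_S] by blast
qed

lemma map_rel_word:
  assumes u: "u \<in> rel_words R"
  shows "map f u \<in> rel_words S"
proof -
  obtain v where v: "v \<in> rel_words R" "v \<noteq> u" "pres_eq R u v"
    using rel_word_partner[OF no_repeated_R u] .
  have uA: "u \<in> lists A" and vA: "v \<in> lists A"
    using rel_words_in_lists[OF presentation_R] u v(1) by blast+
  have "pres_eq (long_rels S) (map f u) (map f v)"
    using pres_eq_image_long_rels pres_eq_map_iff uA vA v(3) by simp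
  moreover have "map f v \<noteq> map f u" using inj_on_map_f uA vA v(2) by (auto dest: inj_onD)
  ultimately obtain x s y where e: "map f u = x @ s @ y" and s: "s \<in> rel_words (long_rels S)"
    using pres_eq_trivial_class by metis
  then have "x = [] \<and> y = []" using long_rel_word_factor_of_image[OF u] by blast
  then have "map f u = s" using e by simp
  moreover have "long_rels S \<subseteq> S" unfolding long_rels_def by blast
  ultimately show ?thesis using s unfolding rel_words_def by blast
qed

lemma map_piece:
  assumes "piece R p"
  shows "piece S (map f p)"
proof -
  consider "p = []"
    | u v where "u \<in> rel_words R" "v \<in> rel_words R" "u \<noteq> v" "is_factor p u" "is_factor p v"
    | u i j where "u \<in> rel_words R" "i \<noteq> j" "occurs_at p u i" "occurs_at p u j"
    using assms unfolding piece_def by blast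
  then show ?thesis
  proof cases
    case 1
    then show ?thesis by (simp add: piece_def)
  next
    case (2 u v)
    then have "map f u \<noteq> map f v"
      using inj_on_map_f rel_words_in_lists[OF presentation_R] by (auto dest: inj_onD)
    moreover have "is_factor (map f p) (map f u)" "is_factor (map f p) (map f v)"
      using 2(4,5) unfolding is_factor_def by force+
    ultimately show ?thesis
      unfolding piece_def using map_rel_word[OF 2(1)] map_rel_word[OF 2(2)] by blast
  next
    case (3 u i j)
    then have "occurs_at (map f p) (map f u) i" "occurs_at (map f p) (map f u) j"
      unfolding occurs_at_def by (simp_all add: take_map drop_map)
    then show ?thesis unfolding piece_def using map_rel_word[OF 3(1)] 3(2) by blast
  qed
qed

lemma C_cond_pullback:
  assumes "C_cond m S"
  shows "C_cond m R"
  unfolding C_cond_def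
proof (intro ballI allI impI)
  fix w ps assume w: "w \<in> rel_words R" and ps: "(\<forall>p \<in> set ps. piece R p) \<and> concat ps = w"
  have "concat (map (map f) ps) = map f w" using ps by (metis map_concat)
  moreover have "piece S q" if "q \<in> set (map (map f) ps)" for q using that ps map_piece by auto
  ultimately have "m \<le> length (map (map f) ps)" using C_condD[OF assms map_rel_word[OF w]] by blast
  then show "m \<le> length ps" by simp
qed

end

theorem corollary3:
  fixes m :: nat
    and A :: "'a set" and R :: "('a list \<times> 'a list) set"
    and B :: "'b set" and S :: "('b list \<times> 'b list) set"
  assumes "0 < m"
    and "is_presentation A R"
    and "generator_minimal A R"
    and "strongly_C 2 R"
    and "is_presentation B S"
    and "strongly_C m S"
    and "presented_iso A R B S"
  shows "strongly_C m R"
proof (cases "m \<le> 2")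
  case True
  then show ?thesis using assms(4) C_cond_mono unfolding strongly_C_def by blast
next
  case False
  then have S2: "strongly_C 2 S"
    using assms(6) C_cond_mono[of m S 2] unfolding strongly_C_def by simp
  have C2: "C_cond 2 R" "C_cond 2 S" using assms(4) S2 unfolding strongly_C_def by simp_all
  then have C1: "C_cond 1 R" "C_cond 1 S"
    using C_cond_mono[OF C2(1), of 1] C_cond_mono[OF C2(2), of 1] by simp_all
  have letters: "[a] \<notin> rel_words R" if "a \<in> A" for a
    using generator_minimal_letter_not_rel_word[OF assms(2-4) that] .
  have letter_class: "z = [a]" if "a \<in> A" "pres_eq R [a] z" for a z
    using C_cond_letter_class[OF C1(1) letters[OF that(1)] that(2)] .
  obtain h where iso: "word_iso A R B S h"
    using assms(7) unfolding presented_iso_def word_iso_def by blast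
  obtain f where f: "f ` A \<subseteq> B"
    "\<And>u v. u \<in> lists A \<Longrightarrow> v \<in> lists A \<Longrightarrow> pres_eq R u v \<longleftrightarrow> pres_eq S (map f u) (map f v)"
    "\<And>b. b \<in> B \<Longrightarrow> \<exists>t \<in> lists A. pres_eq S [b] (map f t)"
    using word_iso.letter_map[OF iso letter_class C1(2)] by blast
  have "letter_embedding A R B S f"
    using letter_embedding.intro[OF assms(2,5,4) S2 letters f] .
  then show ?thesis
    using letter_embedding.C_cond_pullback assms(4,6) unfolding strongly_C_def by blast
qed

end
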